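(* Let $S$ be epsilon-strongly graded and let $r,s\in B(\mathcal{E}_G)^*$ be distinct epsilon-central elements. Then: (i) $(rS_g)(rS_h)=rS_{gh}$ for all $g,h\in N(r)$; in particular $rS=\bigoplus_{g\in N(r)}rS_g$ (with $rS_g=0$ for $g\notin N(r)$), and $rS$ is a strongly $N(r)$-graded ring with identity $r$; (ii) with $N=N(r)\cap N(s)$, the ring $(rS)_N\oplus(sS)_N$, where $(rS)_N=\bigoplus_{g\in N}rS_g$ and $(sS)_N=\bigoplus_{g\in N}sS_g$, is strongly $N$-graded (with components $rS_g\oplus sS_g$, $g\in N$) and has identity $r+s$.
   Context: $G$ is a group with identity $e$; $S=\bigoplus_{g\in G}S_g$ is an associative unital ring graded by $G$, $R=S_e$, $XY$ denotes finite sums of products. $S$ is epsilon-strongly graded: each ideal $S_gS_{g^{-1}}$ of $R$ has an identity $\epsilon_g$ with $\epsilon_gs=s=s\epsilon_{g^{-1}}$ for $s\in S_g$; $\epsilon_e=1$; each $\epsilon_g$ is an idempotent in $Z(R)$. $B(\mathcal{E}_G)$ is the multiplicative semigroup generated by $\{\epsilon_g:g\in G\}$, $B(\mathcal{E}_G)^*=B(\mathcal{E}_G)\setminus\{0\}$, ordered by $a\le b$ iff $a=ab$. For $r\in B(\mathcal{E}_G)^*$, $N(r)=\{g\in G:r\epsilon_g=r\}$. An element $r\in B(\mathcal{E}_G)^*$ is epsilon-central if it is minimal in $B(\mathcal{E}_G)^*$ and $N(r)$ is a subgroup of $G$ (equivalently, for minimal $r$, $r$ lies in the center of $S$). A ring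 graded by a group $H$ is strongly $H$-graded if $A_gA_h=A_{gh}$ for all $g,h\in H$. *)

theory Defs
  imports Main
begin

text \<open>The grading group G is a type of class group_add, written
additively: the product gh is g + h, the identity e is 0, and g inverse is - g.
The graded ring S is the whole type 'a :: ring_1; its homogeneous components
are given by a family Sg :: 'g \<Rightarrow> 'a set.\<close>

definition subgroup_add :: "'g::group_add set \<Rightarrow> bool" where
  "subgroup_add H \<longleftrightarrow> 0 \<in> H \<and> (\<forall>a\<in>H. \<forall>b\<in>H. a + b \<in> H) \<and> (\<forall>a\<in>H. - a \<in> H)"

definition setmult :: "'a::ring_1 set \<Rightarrow> 'a set \<Rightarrow> 'a set" where
  "setmult X Y = {(\<Sum>i<n. x i * y i) | (n::nat) x y. \<forall>i<n. x i \<in> X \<and> y i \<in> Y}"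

definition lmult :: "'a::ring_1 \<Rightarrow> 'a set \<Rightarrow> 'a set" where
  "lmult r X = (\<lambda>x. r * x) ` X"

definition span_of :: "'g set \<Rightarrow> ('g \<Rightarrow> 'a::ring_1 set) \<Rightarrow> 'a set" where
  "span_of H C = {sum f F | F f. finite F \<and> F \<subseteq> H \<and> (\<forall>g\<in>F. f g \<in> C g)}"

text \<open>A (a subset of the ambient ring, with the induced operations) is graded by the
(sub)group H with components C g (g in H): A is the (internal) direct sum of the
additive subgroups C g, and C g C h is contained in C (g h).\<close>
definition graded_by :: "'a::ring_1 set \<Rightarrow> 'g::group_add set \<Rightarrow> ('g \<Rightarrow> 'a set) \<Rightarrow> bool" where
  "graded_by A H C \<longleftrightarrow>
     subgroup_add H \<and>
     (\<forall>g\<in>H. C g \<subseteq> A \<and> 0 \<in> C g \<and> (\<forall>x\<in>C g. \<forall>y\<in>C g. x + y \<in> C g) \<and> (\<forall>x\<in>C g. - x \<in> C g)) \<and>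
     A = span_of H C \<and>
     (\<forall>F f. finite F \<longrightarrow> F \<subseteq> H \<longrightarrow> (\<forall>g\<in>F. f g \<in> C g) \<longrightarrow> sum f F = 0 \<longrightarrow> (\<forall>g\<in>F. f g = 0)) \<and>
     (\<forall>g\<in>H. \<forall>h\<in>H. \<forall>x\<in>C g. \<forall>y\<in>C h. x * y \<in> C (g + h))"

definition strongly_graded_by :: "'a::ring_1 set \<Rightarrow> 'g::group_add set \<Rightarrow> ('g \<Rightarrow> 'a set) \<Rightarrow> bool" where
  "strongly_graded_by A H C \<longleftrightarrow> graded_by A H C \<and> (\<forall>g\<in>H. \<forall>h\<in>H. setmult (C g) (C h) = C (g + h))"

definition has_identity :: "'a::ring_1 set \<Rightarrow> 'a \<Rightarrow> bool" where
  "has_identity A u \<longleftrightarrow> u \<in> A \<and> (\<forall>x\<in>A. u * x = x \<and> x * u = x)"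

definition eps_strong :: "('g::group_add \<Rightarrow> 'a::ring_1 set) \<Rightarrow> ('g \<Rightarrow> 'a) \<Rightarrow> bool" where
  "eps_strong S eps \<longleftrightarrow>
     (\<forall>g. eps g \<in> setmult (S g) (S (- g)) \<and>
          (\<forall>t\<in>setmult (S g) (S (- g)). eps g * t = t \<and> t * eps g = t) \<and>
          (\<forall>s\<in>S g. eps g * s = s \<and> s * eps (- g) = s))"

definition BE :: "('g \<Rightarrow> 'a::ring_1) \<Rightarrow> 'a set" where
  "BE eps = {prod_list (map eps gs) | gs. gs \<noteq> []}"

definition BE_star :: "('g \<Rightarrow> 'a::ring_1) \<Rightarrow> 'a set" where
  "BE_star eps = BE eps - {0}"

definition BE_le :: "'a::ring_1 \<Rightarrow> 'a \<Rightarrow> bool" where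
  "BE_le a b \<longleftrightarrow> a = a * b"

definition minimal_BE :: "('g \<Rightarrow> 'a::ring_1) \<Rightarrow> 'a \<Rightarrow> bool" where
  "minimal_BE eps r \<longleftrightarrow> r \<in> BE_star eps \<and> (\<forall>b\<in>BE_star eps. BE_le b r \<longrightarrow> b = r)"

definition Nset :: "('g \<Rightarrow> 'a::ring_1) \<Rightarrow> 'a \<Rightarrow> 'g set" where
  "Nset eps r = {g. r * eps g = r}"

definition eps_central :: "('g::group_add \<Rightarrow> 'a::ring_1) \<Rightarrow> 'a \<Rightarrow> bool" where
  "eps_central eps r \<longleftrightarrow> minimal_BE eps r \<and> subgroup_add (Nset eps r)"

end

(* A minimal element r of B(E_G)* is fixed or killed by every eps g, so r annihilates S_g
   for g outside N(r). Since u * eps h = eps (g + h) * u for u in S_g, the element r is central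
   as soon as eps_prod (g + L) * eps g = r for r = eps_prod L and g in N(r); this follows from
   minimality because N(r) is a subgroup. A central idempotent e in S_0 with e * eps g = e for all
   g in a subgroup H cuts out a strongly H-graded corner, because e x = e * eps g * x splits
   along eps g in S_g S_(-g). Part (i) is the corner of r, part (ii) the corner of r + s, which
   is idempotent since distinct minimal elements are orthogonal. *)

theory Submission
  imports Defs
begin

lemma setmultI:
  assumes "\<forall>i<n. x i \<in> X \<and> y i \<in> Y"
  shows "(\<Sum>i<(n::nat). x i * y i) \<in> setmult X Y"
  using assms unfolding setmult_def by blast

lemma setmultE:
  assumes "t \<in> setmult X Y"
  obtains n :: nat and x y where "t = (\<Sum>i<n. x i * y i)" "\<forall>i<n. x i \<in> X \<and> y i \<in> Y"
  using assms unfolding setmult_def by blast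

lemma setmult_subset:
  assumes zero: "0 \<in> Z" and add: "\<And>a b. a \<in> Z \<Longrightarrow> b \<in> Z \<Longrightarrow> a + b \<in> Z"
    and mult: "\<And>x y. x \<in> X \<Longrightarrow> y \<in> Y \<Longrightarrow> x * y \<in> Z"
  shows "setmult X Y \<subseteq> Z"
proof
  fix t assume "t \<in> setmult X Y"
  then obtain n :: nat and x y where t: "t = (\<Sum>i<n. x i * y i)"
    and xy: "\<forall>i<n. x i \<in> X \<and> y i \<in> Y"
    by (rule setmultE)
  have "(\<Sum>i<k. x i * y i) \<in> Z" if "k \<le> n" for k
    using that by (induction k) (simp_all add: zero add mult xy)
  then show "t \<in> Z" using t by simp
qed

lemma span_of_single: "g \<in> H \<Longrightarrow> x \<in> C g \<Longrightarrow> x \<in> span_of H C"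
  unfolding span_of_def by (rule CollectI, rule exI[of _ "{g}"], rule exI[of _ "\<lambda>_. x"]) simp

lemma span_of_mono: "(\<And>g. C g \<subseteq> D g) \<Longrightarrow> span_of H C \<subseteq> span_of H D"
  unfolding span_of_def by blast

lemma span_of_add:
  assumes x: "x \<in> span_of H C" and y: "y \<in> span_of H C"
    and zero: "\<And>g. 0 \<in> C g" and add: "\<And>g a b. a \<in> C g \<Longrightarrow> b \<in> C g \<Longrightarrow> a + b \<in> C g"
  shows "x + y \<in> span_of H C"
proof -
  obtain F f where F: "finite F" "F \<subseteq> H" "\<forall>g\<in>F. f g \<in> C g" "x = sum f F"
    using x unfolding span_of_def by blast
  obtain F' f' where F': "finite F'" "F' \<subseteq> H" "\<forall>g\<in>F'. f' g \<in> C g" "y = sum f' F'"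
    using y unfolding span_of_def by blast
  define k where "k g = (if g \<in> F then f g else 0) + (if g \<in> F' then f' g else 0)" for g
  have "x + y = sum k (F \<union> F')"
    using F F' by (simp add: k_def sum.distrib sum.inter_restrict[symmetric] Int_absorb1 Int_absorb2)
  moreover have "\<forall>g\<in>F \<union> F'. k g \<in> C g"
    using F F' by (simp add: k_def zero add)
  ultimately show ?thesis
    unfolding span_of_def using F F' by blast
qed

lemma lmult_span_of: "lmult e (span_of H C) = span_of H (\<lambda>g. lmult e (C g))"
proof
  show "lmult e (span_of H C) \<subseteq> span_of H (\<lambda>g. lmult e (C g))"
  proof
    fix x assume "x \<in> lmult e (span_of H C)"
    then obtain F f where "finite F" "F \<subseteq> H" "\<forall>g\<in>F. f g \<in> C g" "x = e * sum f F"
      unfolding lmult_def span_of_def by blast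
    then show "x \<in> span_of H (\<lambda>g. lmult e (C g))"
      unfolding span_of_def lmult_def
      by (intro CollectI exI[of _ F] exI[of _ "\<lambda>g. e * f g"]) (simp add: sum_distrib_left)
  qed
next
  show "span_of H (\<lambda>g. lmult e (C g)) \<subseteq> lmult e (span_of H C)"
  proof
    fix x assume "x \<in> span_of H (\<lambda>g. lmult e (C g))"
    then obtain F f where F: "finite F" "F \<subseteq> H" "\<forall>g\<in>F. f g \<in> lmult e (C g)" "x = sum f F"
      unfolding span_of_def by blast
    then have "\<forall>g\<in>F. \<exists>c. c \<in> C g \<and> f g = e * c"
      unfolding lmult_def by blast
    then obtain c where c: "\<forall>g\<in>F. c g \<in> C g \<and> f g = e * c g"
      by metis
    then have "x = e * sum c F"
      by (simp add: F(4) sum_distrib_left)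
    moreover have "sum c F \<in> span_of H C"
      unfolding span_of_def using F c by blast
    ultimately show "x \<in> lmult e (span_of H C)"
      unfolding lmult_def by blast
  qed
qed

lemma lmult_orthogonal_idempotents:
  fixes r s :: "'a::ring_1"
  assumes "r * r = r" "s * s = s" "r * s = 0" "s * r = 0"
    and r_X: "\<And>x. x \<in> X \<Longrightarrow> r * x \<in> X" and s_X: "\<And>x. x \<in> X \<Longrightarrow> s * x \<in> X"
    and add_X: "\<And>x y. x \<in> X \<Longrightarrow> y \<in> X \<Longrightarrow> x + y \<in> X"
  shows "{a + b | a b. a \<in> lmult r X \<and> b \<in> lmult s X} = lmult (r + s) X"
proof (intro equalityI subsetI)
  fix z assume "z \<in> {a + b | a b. a \<in> lmult r X \<and> b \<in> lmult s X}"
  then obtain x y where "x \<in> X" "y \<in> X" and z: "z = r * x + s * y"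
    unfolding lmult_def by blast
  then have "r * x + s * y \<in> X" by (simp add: r_X s_X add_X)
  moreover have "z = (r + s) * (r * x + s * y)"
    using assms(1-4) by (simp add: z distrib_left distrib_right flip: mult.assoc)
  ultimately show "z \<in> lmult (r + s) X"
    unfolding lmult_def by blast
next
  fix z assume "z \<in> lmult (r + s) X"
  then obtain x where "x \<in> X" "z = r * x + s * x"
    unfolding lmult_def by (auto simp: distrib_right)
  then show "z \<in> {a + b | a b. a \<in> lmult r X \<and> b \<in> lmult s X}"
    unfolding lmult_def by blast
qed

locale eps_strongly_graded =
  fixes S :: "'g::group_add \<Rightarrow> 'a::ring_1 set" and eps :: "'g \<Rightarrow> 'a"
  assumes graded: "graded_by UNIV UNIV S" and eps_strong: "eps_strong S eps"
begin

lemma homogeneous_zero: "0 \<in> S g"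
  and homogeneous_add: "x \<in> S g \<Longrightarrow> y \<in> S g \<Longrightarrow> x + y \<in> S g"
  and homogeneous_uminus: "x \<in> S g \<Longrightarrow> - x \<in> S g"
  and homogeneous_mult: "x \<in> S g \<Longrightarrow> y \<in> S h \<Longrightarrow> x * y \<in> S (g + h)"
  using graded by (auto simp: graded_by_def)

lemma homogeneous_components_unique:
  "finite F \<Longrightarrow> \<forall>g\<in>F. f g \<in> S g \<Longrightarrow> sum f F = 0 \<Longrightarrow> g \<in> F \<Longrightarrow> f g = 0"
  using graded unfolding graded_by_def by blast

lemma homogeneous_decomposition:
  obtains F f where "finite F" "\<forall>g\<in>F. f g \<in> S g" "x = sum f F"
proof -
  have "x \<in> span_of UNIV S"
    using graded by (simp add: graded_by_def)
  then show ?thesis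
    using that unfolding span_of_def by blast
qed

lemma eps_in_setmult: "eps g \<in> setmult (S g) (S (- g))"
  and eps_mult_setmult: "t \<in> setmult (S g) (S (- g)) \<Longrightarrow> eps g * t = t"
  and setmult_mult_eps: "t \<in> setmult (S g) (S (- g)) \<Longrightarrow> t * eps g = t"
  and eps_mult_homogeneous: "s \<in> S g \<Longrightarrow> eps g * s = s"
  and homogeneous_mult_eps: "s \<in> S g \<Longrightarrow> s * eps (- g) = s"
  using eps_strong by (auto simp: eps_strong_def)

lemma setmult_homogeneous: "setmult (S g) (S h) \<subseteq> S (g + h)"
  by (rule setmult_subset) (simp_all add: homogeneous_zero homogeneous_add homogeneous_mult)

lemma eps_in_S0: "eps g \<in> S 0"
  using setmult_homogeneous[of g "- g"] eps_in_setmult[of g] by auto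

lemma eps_idem: "eps g * eps g = eps g"
  by (rule eps_mult_setmult[OF eps_in_setmult])

lemma eps_commute_S0:
  assumes x: "x \<in> S 0" shows "x * eps g = eps g * x"
proof -
  obtain n :: nat and u v where e: "eps g = (\<Sum>i<n. u i * v i)"
    and uv: "\<forall>i<n. u i \<in> S g \<and> v i \<in> S (- g)"
    using eps_in_setmult[of g] by (rule setmultE)
  have "x * eps g = (\<Sum>i<n. (x * u i) * v i)"
    by (simp add: e sum_distrib_left mult.assoc)
  also have "\<dots> \<in> setmult (S g) (S (- g))"
    by (rule setmultI) (use uv homogeneous_mult[OF x, of _ g] in auto)
  finally have left: "eps g * (x * eps g) = x * eps g"
    by (rule eps_mult_setmult)
  have "eps g * x = (\<Sum>i<n. u i * (v i * x))"
    by (simp add: e sum_distrib_right mult.assoc)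
  also have "\<dots> \<in> setmult (S g) (S (- g))"
    by (rule setmultI) (use uv homogeneous_mult[OF _ x, of _ "- g"] in auto)
  finally have right: "(eps g * x) * eps g = eps g * x"
    by (rule setmult_mult_eps)
  have "x * eps g = eps g * (x * eps g)"
    by (rule left[symmetric])
  also have "\<dots> = eps g * x * eps g"
    by (rule mult.assoc[symmetric])
  also have "\<dots> = eps g * x"
    by (rule right)
  finally show ?thesis .
qed

lemma homogeneous_mult_eps_shift:
  assumes u: "u \<in> S g" shows "u * eps h = eps (g + h) * u"
proof -
  obtain n :: nat and x y where e: "eps h = (\<Sum>i<n. x i * y i)"
    and xy: "\<forall>i<n. x i \<in> S h \<and> y i \<in> S (- h)"
    using eps_in_setmult[of h] by (rule setmultE)
  have "eps (g + h) * (u * eps h) = (\<Sum>i<n. (eps (g + h) * (u * x i)) * y i)"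
    by (simp add: e sum_distrib_left mult.assoc)
  also have "\<dots> = (\<Sum>i<n. (u * x i) * y i)"
    using xy eps_mult_homogeneous[OF homogeneous_mult[OF u]] by (intro sum.cong) auto
  also have "\<dots> = u * eps h"
    by (simp add: e sum_distrib_left mult.assoc)
  finally have left: "eps (g + h) * (u * eps h) = u * eps h" .
  obtain m :: nat and a b where f: "eps (g + h) = (\<Sum>i<m. a i * b i)"
    and ab: "\<forall>i<m. a i \<in> S (g + h) \<and> b i \<in> S (- (g + h))"
    using eps_in_setmult[of "g + h"] by (rule setmultE)
  have bu: "b i * u \<in> S (- h)" if "i < m" for i
    using homogeneous_mult[of "b i" "- (g + h)" u g] ab that u by (simp add: minus_add add.assoc)
  have "eps (g + h) * u * eps h = (\<Sum>i<m. a i * ((b i * u) * eps (- (- h))))"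
    by (simp add: f sum_distrib_right mult.assoc)
  also have "\<dots> = (\<Sum>i<m. a i * (b i * u))"
    using bu homogeneous_mult_eps[of _ "- h"] by (intro sum.cong) auto
  also have "\<dots> = eps (g + h) * u"
    by (simp add: f sum_distrib_right mult.assoc)
  finally show ?thesis
    using left by (metis mult.assoc)
qed

abbreviation eps_prod :: "'g list \<Rightarrow> 'a" where
  "eps_prod L \<equiv> prod_list (map eps L)"

lemma eps_prod_in_S0: "L \<noteq> [] \<Longrightarrow> eps_prod L \<in> S 0"
proof (induction L)
  case (Cons h L)
  then show ?case
    using eps_in_S0 homogeneous_mult[OF eps_in_S0, of _ 0] by (cases "L = []") auto
qed simp

lemma eps_prod_commute_S0: "x \<in> S 0 \<Longrightarrow> x * eps_prod L = eps_prod L * x"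
  by (induction L) (simp_all, metis eps_commute_S0 mult.assoc)

lemma eps_prod_commute: "eps_prod L * eps_prod K = eps_prod K * eps_prod L"
  by (cases "L = []") (simp_all add: eps_prod_commute_S0 eps_prod_in_S0)

lemma eps_prod_idem: "eps_prod L * eps_prod L = eps_prod L"
proof (induction L)
  case (Cons h L)
  have "eps_prod (h # L) * eps_prod (h # L) = eps h * (eps_prod L * eps h) * eps_prod L"
    by (simp add: mult.assoc)
  also have "\<dots> = (eps h * eps h) * (eps_prod L * eps_prod L)"
    by (simp add: eps_prod_commute_S0[OF eps_in_S0, symmetric] mult.assoc)
  finally show ?case
    using Cons eps_idem by simp
qed simp

lemma eps_prod_mult_eps_mem: "h \<in> set L \<Longrightarrow> eps_prod L * eps h = eps_prod L"
  using eps_idem[of h] eps_prod_commute[of "[h]"]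
  by (induction L) (auto simp: mult.assoc, metis mult.assoc)

lemma mult_eps_prod_absorb: "\<forall>h\<in>set L. x * eps h = x \<Longrightarrow> x * eps_prod L = x"
  by (induction L) (simp_all, metis mult.assoc)

lemma homogeneous_mult_eps_prod_shift:
  "u \<in> S g \<Longrightarrow> u * eps_prod L = eps_prod (map ((+) g) L) * u"
  by (induction L) (simp_all add: homogeneous_mult_eps_shift flip: mult.assoc, metis mult.assoc)

lemma eps_prod_shift_cong:
  assumes "eps_prod L = eps_prod K"
  shows "eps_prod (map ((+) h) L) * eps h = eps_prod (map ((+) h) K) * eps h"
proof -
  obtain n :: nat and x y where e: "eps h = (\<Sum>i<n. x i * y i)"
    and xy: "\<forall>i<n. x i \<in> S h \<and> y i \<in> S (- h)"
    using eps_in_setmult[of h] by (rule setmultE)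
  have "eps_prod (map ((+) h) M) * eps h = (\<Sum>i<n. x i * eps_prod M * y i)" for M
    unfolding e sum_distrib_left
    by (intro sum.cong refl) (use xy homogeneous_mult_eps_prod_shift in \<open>metis mult.assoc lessThan_iff\<close>)
  then show ?thesis
    using assms by simp
qed

lemma minimal_BE_obtain:
  assumes "minimal_BE eps r"
  obtains L where "L \<noteq> []" "r = eps_prod L"
  using assms unfolding minimal_BE_def BE_star_def BE_def by blast

lemma minimal_BE_mult_eps_prod:
  assumes min: "minimal_BE eps r" and nz: "r * eps_prod K \<noteq> 0"
  shows "r * eps_prod K = r"
proof -
  obtain L where L: "L \<noteq> []" "r = eps_prod L"
    using min by (rule minimal_BE_obtain)
  have "r * eps_prod K = eps_prod (L @ K)"
    using L by simp
  then have "r * eps_prod K \<in> BE_star eps"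
    using L nz unfolding BE_star_def BE_def by blast
  moreover have "BE_le (r * eps_prod K) r"
    unfolding BE_le_def L(2) using eps_prod_idem[of L] eps_prod_commute[of K L]
    by (metis mult.assoc)
  ultimately show ?thesis
    using min unfolding minimal_BE_def by blast
qed

lemma minimal_BE_mult_eps: "minimal_BE eps r \<Longrightarrow> r * eps g \<noteq> r \<Longrightarrow> r * eps g = 0"
  using minimal_BE_mult_eps_prod[of r "[g]"] by auto

lemma minimal_BE_orthogonal:
  assumes r: "minimal_BE eps r" and s: "minimal_BE eps s" and "r \<noteq> s"
  shows "r * s = 0"
proof (rule ccontr)
  assume nz: "r * s \<noteq> 0"
  obtain L where L: "r = eps_prod L"
    using r by (rule minimal_BE_obtain)
  obtain K where K: "s = eps_prod K"
    using s by (rule minimal_BE_obtain)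
  have "s * r = r * s"
    unfolding L K by (rule eps_prod_commute)
  then have "r * s = r" "s * r = s"
    using minimal_BE_mult_eps_prod[OF r, of K] minimal_BE_mult_eps_prod[OF s, of L] nz L K
    by auto
  with \<open>s * r = r * s\<close> \<open>r \<noteq> s\<close> show False
    by simp
qed

lemma eps_central_mult_eps:
  "eps_central eps r \<Longrightarrow> g \<notin> Nset eps r \<Longrightarrow> r * eps g = 0"
  using minimal_BE_mult_eps unfolding eps_central_def Nset_def by blast

lemma eps_central_annihilates:
  assumes "eps_central eps r" "g \<notin> Nset eps r" "u \<in> S g"
  shows "r * u = 0"
proof -
  have "r * u = r * eps g * u"
    using eps_mult_homogeneous[OF assms(3)] by (simp add: mult.assoc)
  then show ?thesis
    using eps_central_mult_eps[OF assms(1,2)] by simp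
qed

lemma eps_central_in_S0: "eps_central eps r \<Longrightarrow> r \<in> S 0"
  and eps_central_idem: "eps_central eps r \<Longrightarrow> r * r = r"
  unfolding eps_central_def
  by (auto elim!: minimal_BE_obtain simp: eps_prod_in_S0 eps_prod_idem)

text \<open>The product below lies above r because all its factors lie in the subgroup N(r), and
  below r because conjugation by eps k, well defined on products by eps_prod_shift_cong, carries
  r = r * eps_prod (-k + L @ [-k]) to it.\<close>

lemma eps_central_shift:
  assumes c: "eps_central eps r" and r: "r = eps_prod L" and k: "k \<in> Nset eps r"
  shows "eps_prod (map ((+) k) L @ [k]) = r"
proof -
  have N: "subgroup_add (Nset eps r)"
    using c unfolding eps_central_def by blast
  have "set L \<subseteq> Nset eps r"
    using eps_prod_mult_eps_mem r unfolding Nset_def by auto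
  then have above: "r * eps_prod (map ((+) j) L @ [j]) = r" if "j \<in> Nset eps r" for j
    using that N unfolding subgroup_add_def
    by (intro mult_eps_prod_absorb) (auto simp: Nset_def)
  have "- k \<in> Nset eps r" "0 \<in> Nset eps r"
    using k N unfolding subgroup_add_def by auto
  then have r0: "r * eps 0 = r" and "eps_prod L = eps_prod (L @ map ((+) (- k)) L @ [- k])"
    using above[of "- k"] r unfolding Nset_def by auto
  from eps_prod_shift_cong[OF this(2), of k]
  have "eps_prod (map ((+) k) L @ [k]) = eps_prod (map ((+) k) L) * (r * eps 0) * eps k"
    by (simp add: r comp_def mult.assoc)
  also have "\<dots> = eps_prod (map ((+) k) L @ [k]) * r"
    using eps_commute_S0[OF eps_central_in_S0[OF c], of k] by (simp add: r0 mult.assoc)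
  also have "\<dots> = r * eps_prod (map ((+) k) L @ [k])"
    unfolding r by (rule eps_prod_commute)
  also have "\<dots> = r"
    by (rule above[OF k])
  finally show ?thesis .
qed

lemma eps_central_commute_homogeneous:
  assumes c: "eps_central eps r" and u: "u \<in> S g"
  shows "r * u = u * r"
proof (cases "g \<in> Nset eps r")
  case True
  have "minimal_BE eps r"
    using c by (simp add: eps_central_def)
  then obtain L where r: "r = eps_prod L"
    by (rule minimal_BE_obtain)
  have shift: "eps_prod (map ((+) g) L) * eps g = r"
    using eps_central_shift[OF c r True] by simp
  have "u * r = eps_prod (map ((+) g) L) * (eps g * u)"
    using homogeneous_mult_eps_prod_shift[OF u] eps_mult_homogeneous[OF u] r by simp
  also have "\<dots> = r * u"
    by (simp only: shift flip: mult.assoc)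
  finally show ?thesis ..
next
  case False
  have "- g \<notin> Nset eps r"
  proof
    assume "- g \<in> Nset eps r"
    then have "- (- g) \<in> Nset eps r"
      using c unfolding eps_central_def subgroup_add_def by blast
    with False show False
      by simp
  qed
  have "u * r = u * (eps (- g) * r)"
    using homogeneous_mult_eps[OF u] by (simp flip: mult.assoc)
  also have "\<dots> = u * (r * eps (- g))"
    using eps_commute_S0[OF eps_central_in_S0[OF c]] by simp
  finally show ?thesis
    using eps_central_mult_eps[OF c \<open>- g \<notin> _\<close>] eps_central_annihilates[OF c False u] by simp
qed

lemma eps_central_commute:
  assumes "eps_central eps r" shows "r * x = x * r"
proof -
  obtain F f where F: "\<forall>g\<in>F. f g \<in> S g" "x = sum f F"
    by (rule homogeneous_decomposition)
  have "(\<Sum>g\<in>F. r * f g) = (\<Sum>g\<in>F. f g * r)"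
    using F(1) eps_central_commute_homogeneous[OF assms] by (intro sum.cong) auto
  then show ?thesis
    by (simp add: F(2) sum_distrib_left sum_distrib_right)
qed

lemma eps_central_orthogonal:
  assumes r: "eps_central eps r" and s: "eps_central eps s" and "r \<noteq> s"
  shows "r * s = 0" and "s * r = 0"
proof -
  show "r * s = 0"
    using minimal_BE_orthogonal[OF _ _ \<open>r \<noteq> s\<close>] r s unfolding eps_central_def by blast
  then show "s * r = 0"
    using eps_central_commute[OF r] by metis
qed

lemma lmult_S0_homogeneous: "e \<in> S 0 \<Longrightarrow> lmult e (S g) \<subseteq> S g"
  using homogeneous_mult[of e 0] unfolding lmult_def by fastforce

lemma lmult_homogeneous_zero: "0 \<in> lmult e (S g)"
  unfolding lmult_def using homogeneous_zero by force

lemma lmult_homogeneous_add: "x \<in> lmult e (S g) \<Longrightarrow> y \<in> lmult e (S g) \<Longrightarrow> x + y \<in> lmult e (S g)"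
  using homogeneous_add unfolding lmult_def by (auto simp flip: distrib_left)

lemma lmult_homogeneous_uminus: "x \<in> lmult e (S g) \<Longrightarrow> - x \<in> lmult e (S g)"
proof -
  assume "x \<in> lmult e (S g)"
  then obtain a where "a \<in> S g" "x = e * a"
    unfolding lmult_def by blast
  then show ?thesis
    unfolding lmult_def by (intro image_eqI[of _ _ "- a"]) (simp_all add: homogeneous_uminus)
qed

context
  fixes e :: 'a
  assumes e_S0: "e \<in> S 0" and e_idem: "e * e = e" and e_central: "\<And>x. e * x = x * e"
begin

lemma corner_mult: "(e * x) * (e * y) = e * (x * y)"
  by (metis e_central e_idem mult.assoc)

lemma corner_homogeneous_mult: "x \<in> lmult e (S g) \<Longrightarrow> y \<in> lmult e (S h) \<Longrightarrow> x * y \<in> lmult e (S (g + h))"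
  unfolding lmult_def using corner_mult homogeneous_mult by blast

lemma corner_setmult:
  assumes g: "e * eps g = e"
  shows "setmult (lmult e (S g)) (lmult e (S h)) = lmult e (S (g + h))"
proof
  show "setmult (lmult e (S g)) (lmult e (S h)) \<subseteq> lmult e (S (g + h))"
    by (rule setmult_subset) (simp_all add: lmult_homogeneous_zero lmult_homogeneous_add corner_homogeneous_mult)
next
  show "lmult e (S (g + h)) \<subseteq> setmult (lmult e (S g)) (lmult e (S h))"
  proof
    fix t assume "t \<in> lmult e (S (g + h))"
    then obtain x where x: "x \<in> S (g + h)" and t: "t = e * x"
      unfolding lmult_def by blast
    obtain n :: nat and u v where eps: "eps g = (\<Sum>i<n. u i * v i)"
      and uv: "\<forall>i<n. u i \<in> S g \<and> v i \<in> S (- g)"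
      using eps_in_setmult[of g] by (rule setmultE)
    have "v i * x \<in> S h" if "i < n" for i
      using homogeneous_mult[of "v i" "- g" x "g + h"] uv that x by (simp add: add.assoc[symmetric])
    then have mem: "(\<Sum>i<n. (e * u i) * (e * (v i * x))) \<in> setmult (lmult e (S g)) (lmult e (S h))"
      using uv by (intro setmultI) (auto simp: lmult_def)
    have "t = e * (eps g * x)"
      by (simp add: t g flip: mult.assoc)
    also have "\<dots> = (\<Sum>i<n. e * (u i * (v i * x)))"
      by (simp add: eps sum_distrib_left sum_distrib_right mult.assoc)
    also have "\<dots> = (\<Sum>i<n. (e * u i) * (e * (v i * x)))"
      by (simp only: corner_mult)
    finally show "t \<in> setmult (lmult e (S g)) (lmult e (S h))"
      using mem by simp
  qed
qed

lemma corner_strongly_graded: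
  assumes H: "subgroup_add H" and e_eps: "\<And>g. g \<in> H \<Longrightarrow> e * eps g = e"
  shows "strongly_graded_by (lmult e (span_of H S)) H (\<lambda>g. lmult e (S g))"
  unfolding strongly_graded_by_def graded_by_def lmult_span_of
proof (intro conjI ballI allI impI)
  show "subgroup_add H" by (fact H)
  show "lmult e (S g) \<subseteq> span_of H (\<lambda>g. lmult e (S g))" if "g \<in> H" for g
    using that by (intro subsetI span_of_single)
  show "0 \<in> lmult e (S g)" for g
    by (rule lmult_homogeneous_zero)
  show "x + y \<in> lmult e (S g)" if "x \<in> lmult e (S g)" "y \<in> lmult e (S g)" for g x y
    using that by (rule lmult_homogeneous_add)
  show "- x \<in> lmult e (S g)" if "x \<in> lmult e (S g)" for g x
    using that by (rule lmult_homogeneous_uminus)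
  show "x * y \<in> lmult e (S (g + h))" if "x \<in> lmult e (S g)" "y \<in> lmult e (S h)" for g h x y
    using that by (rule corner_homogeneous_mult)
  show "f g = 0"
    if "finite F" "F \<subseteq> H" "\<forall>g\<in>F. f g \<in> lmult e (S g)" "sum f F = 0" "g \<in> F" for F f g
  proof -
    have "\<forall>g\<in>F. f g \<in> S g"
      using that(3) lmult_S0_homogeneous[OF e_S0] by blast
    then show ?thesis
      using homogeneous_components_unique that(1,4,5) by blast
  qed
  show "setmult (lmult e (S g)) (lmult e (S h)) = lmult e (S (g + h))" if "g \<in> H" for g h
    using e_eps[OF that] by (rule corner_setmult)
qed (rule refl)

lemma corner_has_identity:
  assumes "0 \<in> H" shows "has_identity (lmult e (span_of H S)) e"
  unfolding has_identity_def
proof (intro conjI ballI)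
  have "e \<in> span_of H S"
    using span_of_single[of 0 H e S, OF assms e_S0] .
  then show "e \<in> lmult e (span_of H S)"
    unfolding lmult_def by (intro image_eqI[of _ _ e]) (simp_all add: e_idem)
  fix x assume "x \<in> lmult e (span_of H S)"
  then obtain a where "x = e * a"
    unfolding lmult_def by blast
  then show "e * x = x"
    by (simp add: e_idem flip: mult.assoc)
  then show "x * e = x"
    by (simp add: e_central)
qed

end

lemma eps_central_lmult_outside:
  assumes "eps_central eps r" "g \<notin> Nset eps r"
  shows "lmult r (S g) = {0}"
  using eps_central_annihilates[OF assms] homogeneous_zero unfolding lmult_def by auto

lemma eps_central_lmult_UNIV:
  assumes c: "eps_central eps r"
  shows "lmult r UNIV = lmult r (span_of (Nset eps r) S)"
proof (intro equalityI subsetI)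
  fix t assume "t \<in> lmult r UNIV"
  then obtain x where t: "t = r * x"
    unfolding lmult_def by blast
  obtain F f where F: "finite F" "\<forall>g\<in>F. f g \<in> S g" "x = sum f F"
    by (rule homogeneous_decomposition)
  have "t = (\<Sum>g\<in>F. r * f g)"
    by (simp add: t F(3) sum_distrib_left)
  also have "\<dots> = (\<Sum>g\<in>F \<inter> Nset eps r. r * f g)"
    using F eps_central_annihilates[OF c] by (intro sum.mono_neutral_right) auto
  also have "\<dots> = r * sum f (F \<inter> Nset eps r)"
    by (simp add: sum_distrib_left)
  finally show "t \<in> lmult r (span_of (Nset eps r) S)"
    unfolding lmult_def span_of_def using F by blast
qed (auto simp: lmult_def)

context
  fixes r s :: 'a
  assumes r_S0: "r \<in> S 0" and s_S0: "s \<in> S 0" and r_idem: "r * r = r" and s_idem: "s * s = s"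
    and rs: "r * s = 0" and sr: "s * r = 0"
begin

lemma lmult_orthogonal_sum_homogeneous:
  "{a + b | a b. a \<in> lmult r (S g) \<and> b \<in> lmult s (S g)} = lmult (r + s) (S g)"
  using lmult_S0_homogeneous[OF r_S0] lmult_S0_homogeneous[OF s_S0] homogeneous_add
  by (intro lmult_orthogonal_idempotents[OF r_idem s_idem rs sr]) (auto simp: lmult_def image_subset_iff)

lemma lmult_orthogonal_sum_span:
  "{a + b | a b. a \<in> span_of H (\<lambda>g. lmult r (S g)) \<and> b \<in> span_of H (\<lambda>g. lmult s (S g))}
    = lmult (r + s) (span_of H S)"
proof -
  have closed: "lmult e (span_of H S) \<subseteq> span_of H S" if "e \<in> S 0" for e
    unfolding lmult_span_of by (intro span_of_mono lmult_S0_homogeneous that)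
  show ?thesis
    unfolding lmult_span_of[symmetric]
    using closed[OF r_S0] closed[OF s_S0]
    by (intro lmult_orthogonal_idempotents[OF r_idem s_idem rs sr])
      (auto simp: lmult_def intro: span_of_add homogeneous_zero homogeneous_add)
qed

end

lemma eps_central_corner:
  assumes c: "eps_central eps r"
  shows "strongly_graded_by (lmult r UNIV) (Nset eps r) (\<lambda>g. lmult r (S g))"
    and "has_identity (lmult r UNIV) r"
proof -
  have N: "subgroup_add (Nset eps r)"
    using c by (simp add: eps_central_def)
  note corner = eps_central_in_S0[OF c] eps_central_idem[OF c] eps_central_commute[OF c]
  show "strongly_graded_by (lmult r UNIV) (Nset eps r) (\<lambda>g. lmult r (S g))"
    unfolding eps_central_lmult_UNIV[OF c] using corner N
    by (rule corner_strongly_graded) (simp add: Nset_def)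
  show "has_identity (lmult r UNIV) r"
    unfolding eps_central_lmult_UNIV[OF c] using corner
    by (rule corner_has_identity) (use N in \<open>simp add: subgroup_add_def\<close>)
qed

lemma eps_central_pair_corner:
  assumes r: "eps_central eps r" and s: "eps_central eps s" and "r \<noteq> s"
  defines "N \<equiv> Nset eps r \<inter> Nset eps s"
  shows "strongly_graded_by (lmult (r + s) (span_of N S)) N (\<lambda>g. lmult (r + s) (S g))"
    and "has_identity (lmult (r + s) (span_of N S)) (r + s)"
proof -
  have idem: "(r + s) * (r + s) = r + s"
    using eps_central_idem[OF r] eps_central_idem[OF s] eps_central_orthogonal[OF r s \<open>r \<noteq> s\<close>]
    by (simp add: algebra_simps)
  have S0: "r + s \<in> S 0"
    using eps_central_in_S0[OF r] eps_central_in_S0[OF s] by (rule homogeneous_add)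
  have central: "(r + s) * x = x * (r + s)" for x
    using eps_central_commute[OF r] eps_central_commute[OF s] by (simp add: algebra_simps)
  have N: "subgroup_add N"
    using r s unfolding N_def eps_central_def subgroup_add_def by blast
  have "(r + s) * eps g = r + s" if "g \<in> N" for g
    using that by (simp add: N_def Nset_def algebra_simps)
  with S0 idem central N
  show "strongly_graded_by (lmult (r + s) (span_of N S)) N (\<lambda>g. lmult (r + s) (S g))"
    by (rule corner_strongly_graded)
  from S0 idem central
  show "has_identity (lmult (r + s) (span_of N S)) (r + s)"
    by (rule corner_has_identity) (use N in \<open>simp add: subgroup_add_def\<close>)
qed

end

theorem mainTheorem9:
  fixes S :: "'g::group_add \<Rightarrow> 'a::ring_1 set"
    and eps :: "'g \<Rightarrow> 'a"
    and r s :: 'a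
  assumes graded: "graded_by UNIV UNIV S"
    and epsS: "eps_strong S eps"
    and cr: "eps_central eps r"
    and cs: "eps_central eps s"
    and rs: "r \<noteq> s"
  shows "(\<forall>g\<in>Nset eps r. \<forall>h\<in>Nset eps r.
            setmult (lmult r (S g)) (lmult r (S h)) = lmult r (S (g + h)))
       \<and> (\<forall>g. g \<notin> Nset eps r \<longrightarrow> lmult r (S g) = {0})
       \<and> strongly_graded_by (lmult r UNIV) (Nset eps r) (\<lambda>g. lmult r (S g))
       \<and> has_identity (lmult r UNIV) r
       \<and> (let N = Nset eps r \<inter> Nset eps s;
              A = {a + b | a b. a \<in> span_of N (\<lambda>g. lmult r (S g)) \<and>
                                b \<in> span_of N (\<lambda>g. lmult s (S g))}
          in strongly_graded_by A N
               (\<lambda>g. {a + b | a b. a \<in> lmult r (S g) \<and> b \<in> lmult s (S g)})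
             \<and> has_identity A (r + s))"
proof -
  interpret eps_strongly_graded S eps
    using graded epsS by unfold_locales
  note orthogonal = eps_central_in_S0[OF cr] eps_central_in_S0[OF cs]
    eps_central_idem[OF cr] eps_central_idem[OF cs] eps_central_orthogonal[OF cr cs rs]
  show ?thesis
    unfolding Let_def lmult_orthogonal_sum_span[OF orthogonal]
      lmult_orthogonal_sum_homogeneous[OF orthogonal]
  proof (intro conjI ballI allI impI)
    show "setmult (lmult r (S g)) (lmult r (S h)) = lmult r (S (g + h))"
      if "g \<in> Nset eps r" "h \<in> Nset eps r" for g h
      using eps_central_corner(1)[OF cr] that unfolding strongly_graded_by_def by blast
  qed (simp_all add: eps_central_corner[OF cr] eps_central_pair_corner[OF cr cs rs]
      eps_central_lmult_outside[OF cr])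
qed

end
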